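(* For $n\geq 0$ let $D_n$ denote the $1\times n$ (one row, $n$ columns) misère \textsc{Domineering} rectangle, in which Left places vertical dominoes and Right places horizontal dominoes. Write $n=6k+r$ with $k\geq 0$, $0\leq r\leq 5$. Then, in every universe $\mathcal{U}$ (i.e. with respect to $\equiv_\mathcal{U}$ for every universe $\mathcal{U}$), $D_n$ is equal to: $k\cdot(\bar{1}0)_\#$ if $r\in\{0,1\}$; $k\cdot(\bar{1}0)_\#+\bar{1}$ if $r\in\{2,3\}$; $k\cdot(\bar{1}0)_\#+\bar{1}0$ if $r=4$; $k\cdot(\bar{1}0)_\#+\bar{2}$ if $r=5$.
   Context: Games are finite partizan games; $o(G)$ is the misère outcome class (ordered $\mathscr{L}>\mathscr{N}>\mathscr{R}$, $\mathscr{L}>\mathscr{P}>\mathscr{R}$). A universe is a set of games closed under options, disjunctive sums, conjugates, and forming $\{\mathscr{G}^L\mid\mathscr{G}^R\}$ from nonempty finite subsets of it; $G\equiv_\mathcal{U}H$ means $o(G+X)=o(H+X)$ for all $X\in\mathcal{U}$. Notation: $\bar{0}=0$, $\bar{m}=\{\cdot\mid\overline{m-1}\}$ for $m\geq1$ ($\cdot$ meaning no options); $\bar{1}0=\{\cdot\mid\bar{1},0\}$; $(\bar{1}0)_\#=\{\cdot\mid\bar{1}0\}$; $k\cdot G$ is the disjunctive sum of $k$ copies of $G$. *)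

theory Defs
  imports Main "HOL-Library.Product_Lexorder"
begin

text \<open>A game is given by its list of Left options and its list of Right options
(a list representation of the finite sets of options; all notions below are
invariant under reordering/duplication).\<close>
datatype game = Game "game list" "game list"

fun leftOpts :: "game \<Rightarrow> game list" where "leftOpts (Game L R) = L"
fun rightOpts :: "game \<Rightarrow> game list" where "rightOpts (Game L R) = R"

definition zero :: game where "zero = Game [] []"

function gsum :: "game \<Rightarrow> game \<Rightarrow> game" (infixl "\<oplus>" 65) where
  "gsum (Game L R) (Game L' R') =
     Game (map (\<lambda>x. gsum x (Game L' R')) L @ map (\<lambda>y. gsum (Game L R) y) L')
          (map (\<lambda>x. gsum x (Game L' R')) R @ map (\<lambda>y. gsum (Game L R) y) R')"
  by pat_completeness auto
termination
  by (relation "measure (\<lambda>(x, y). size x + size y)")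
     (auto dest!: size_list_estimation'[where f=size, OF _ order_refl] simp: less_Suc_eq_le)

fun conjg :: "game \<Rightarrow> game" where
  "conjg (Game L R) = Game (map conjg R) (map conjg L)"

text \<open>leftFirst G: Left wins G playing first (misere: a player with no move wins).
leftSecond G: Left wins G when Right plays first.\<close>
fun leftFirst :: "game \<Rightarrow> bool" and leftSecond :: "game \<Rightarrow> bool" where
  "leftFirst (Game L R) = (L = [] \<or> (\<exists>G\<in>set L. leftSecond G))"
| "leftSecond (Game L R) = (R \<noteq> [] \<and> (\<forall>G\<in>set R. leftFirst G))"

datatype outcome = OutL | OutN | OutP | OutR

definition misere_outcome :: "game \<Rightarrow> outcome" where
  "misere_outcome G =
     (if leftFirst G then (if leftSecond G then OutL else OutN)
      else (if leftSecond G then OutP else OutR))"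

definition universe :: "game set \<Rightarrow> bool" where
  "universe U \<longleftrightarrow>
     (\<forall>G\<in>U. \<forall>H. H \<in> set (leftOpts G) \<or> H \<in> set (rightOpts G) \<longrightarrow> H \<in> U) \<and>
     (\<forall>G\<in>U. \<forall>H\<in>U. G \<oplus> H \<in> U) \<and>
     (\<forall>G\<in>U. conjg G \<in> U) \<and>
     (\<forall>L R. L \<noteq> [] \<and> R \<noteq> [] \<and> set L \<subseteq> U \<and> set R \<subseteq> U \<longrightarrow> Game L R \<in> U)"

definition equiv_univ :: "game set \<Rightarrow> game \<Rightarrow> game \<Rightarrow> bool" where
  "equiv_univ U G H \<longleftrightarrow> (\<forall>X\<in>U. misere_outcome (G \<oplus> X) = misere_outcome (H \<oplus> X))"

fun bar :: "nat \<Rightarrow> game" where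
  "bar 0 = zero"
| "bar (Suc m) = Game [] [bar m]"

definition bar1_0 :: game where "bar1_0 = Game [] [bar 1, zero]"

definition bar1_0_sharp :: game where "bar1_0_sharp = Game [] [bar1_0]"

fun gmult :: "nat \<Rightarrow> game \<Rightarrow> game" where
  "gmult 0 G = zero"
| "gmult (Suc k) G = G \<oplus> gmult k G"

text \<open>Domineering on a finite set S of empty cells (row, column).  Left places a
vertical domino covering (i,j),(i+1,j); Right places a horizontal domino covering
(i,j),(i,j+1).\<close>
function domineering :: "(nat \<times> nat) set \<Rightarrow> game" where
  "domineering S =
     (if finite S then
        Game (map (\<lambda>(i,j). domineering (S - {(i,j), (Suc i, j)}))
                 (filter (\<lambda>(i,j). (Suc i, j) \<in> S) (sorted_list_of_set S)))
             (map (\<lambda>(i,j). domineering (S - {(i,j), (i, Suc j)}))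
                 (filter (\<lambda>(i,j). (i, Suc j) \<in> S) (sorted_list_of_set S)))
      else zero)"
  by pat_completeness auto
termination
proof (relation "measure card")
  fix S :: "(nat \<times> nat) set" and x i j
  assume "finite S" "x \<in> set (filter (\<lambda>(i,j). (Suc i, j) \<in> S) (sorted_list_of_set S))" "(i,j) = x"
  then show "(S - {(i,j), (Suc i, j)}, S) \<in> measure card"
    by (auto intro!: psubset_card_mono)
next
  fix S :: "(nat \<times> nat) set" and x i j
  assume "finite S" "x \<in> set (filter (\<lambda>(i,j). (i, Suc j) \<in> S) (sorted_list_of_set S))" "(i,j) = x"
  then show "(S - {(i,j), (i, Suc j)}, S) \<in> measure card"
    by (auto intro!: psubset_card_mono)
qed auto

definition D :: "nat \<Rightarrow> game" where
  "D n = domineering {(0, j) | j. j < n}"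

end

theory Submission
  imports Defs
begin

text \<open>
  Left has no move on a 1 x n strip, so every position met here is a Left-dead game, i.e. just a
  tree of Right moves. For such games a simulation preorder suffices: if every Right move of G
  can be answered by a Right move of H leading to a recursively dominated position, then G + X
  is at least as good for Left as H + X for every game X whatsoever.

  A horizontal domino on columns j, j+1 splits the strip into D j + D l with j + l + 2 = n,
  so up to simulation D n is determined by this recursion. The claimed values (k copies of
  bar1_0_sharp plus a game depending on the remainder r) satisfy the same recursion up to
  simulation: Right's move in a copy of bar1_0_sharp leaves bar1_0, which is the value of D 4;
  blocks of six columns are carried by whole copies of bar1_0_sharp; and what remains is a
  finite table on remainders below 6, checked by evaluation.
\<close>

section \<open>Disjunctive sums\<close>

lemma leftOpts_gsum [simp]:
  "leftOpts (G \<oplus> H) = map (\<lambda>x. x \<oplus> H) (leftOpts G) @ map (\<lambda>y. G \<oplus> y) (leftOpts H)"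
  by (cases G; cases H) simp

lemma rightOpts_gsum [simp]:
  "rightOpts (G \<oplus> H) = map (\<lambda>x. x \<oplus> H) (rightOpts G) @ map (\<lambda>y. G \<oplus> y) (rightOpts H)"
  by (cases G; cases H) simp

lemma rightOpts_gsumE:
  assumes "x \<in> set (rightOpts (G \<oplus> K))"
  obtains g where "g \<in> set (rightOpts G)" "x = g \<oplus> K"
    | k where "k \<in> set (rightOpts K)" "x = G \<oplus> k"
  using assms by auto

lemma game_eqI: "leftOpts G = leftOpts H \<Longrightarrow> rightOpts G = rightOpts H \<Longrightarrow> G = H"
  by (cases G; cases H) simp

lemma size_opts:
  "x \<in> set (leftOpts G) \<Longrightarrow> size x < size G"
  "x \<in> set (rightOpts G) \<Longrightarrow> size x < size G"
  by (cases G; auto dest!: size_list_estimation'[where f=size, OF _ order_refl] simp: less_Suc_eq_le)+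

lemma zero_opts [simp]: "leftOpts zero = []" "rightOpts zero = []"
  by (simp_all add: zero_def)

lemma gsum_zero_right [simp]: "G \<oplus> zero = G"
  by (induction G) (simp_all add: zero_def map_idI)

lemma gsum_zero_left [simp]: "zero \<oplus> G = G"
  by (induction G) (simp_all add: zero_def map_idI)

lemma gsum_assoc: "(G \<oplus> H) \<oplus> K = G \<oplus> (H \<oplus> K)"
proof (induction "size G + size H + size K" arbitrary: G H K rule: less_induct)
  case less
  show ?case
    by (rule game_eqI) (auto intro!: less dest: size_opts)
qed

lemma gmult_add: "gmult (p + q) G = gmult p G \<oplus> gmult q G"
  by (induction p) (simp_all add: zero_def[symmetric] gsum_assoc)

lemma leftFirst_iff: "leftFirst G \<longleftrightarrow> leftOpts G = [] \<or> (\<exists>x\<in>set (leftOpts G). leftSecond x)"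
  by (cases G) simp

lemma leftSecond_iff: "leftSecond G \<longleftrightarrow> rightOpts G \<noteq> [] \<and> (\<forall>x\<in>set (rightOpts G). leftFirst x)"
  by (cases G) simp

section \<open>Left-dead games and simulation\<close>

fun left_dead :: "game \<Rightarrow> bool" where
  "left_dead (Game L R) \<longleftrightarrow> L = [] \<and> (\<forall>x\<in>set R. left_dead x)"

lemma left_dead_iff: "left_dead G \<longleftrightarrow> leftOpts G = [] \<and> (\<forall>x\<in>set (rightOpts G). left_dead x)"
  by (cases G) simp

lemma leftOpts_left_dead: "left_dead G \<Longrightarrow> leftOpts G = []"
  by (cases G) simp

lemma left_dead_gsum: "left_dead G \<Longrightarrow> left_dead H \<Longrightarrow> left_dead (G \<oplus> H)"
  by (induction G H rule: gsum.induct) auto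

lemma left_dead_gmult: "left_dead G \<Longrightarrow> left_dead (gmult k G)"
  by (induction k) (simp_all add: zero_def left_dead_gsum)

lemma left_dead_bar [simp]: "left_dead (bar m)"
  by (induction m) (simp_all add: zero_def)

lemma left_dead_bar1_0 [simp]: "left_dead bar1_0"
  by (simp add: bar1_0_def zero_def)

lemma left_dead_bar1_0_sharp [simp]: "left_dead bar1_0_sharp"
  by (simp add: bar1_0_sharp_def)

text \<open>
  The clause on empty option lists reflects misere play: running out of moves is good for the
  player to move, so G may leave Right without a move only where H does.
\<close>
fun dead_ge :: "game \<Rightarrow> game \<Rightarrow> bool" where
  "dead_ge (Game L R) H \<longleftrightarrow> L = [] \<and> leftOpts H = [] \<and> (R = [] \<longrightarrow> rightOpts H = []) \<and>
     (\<forall>g\<in>set R. \<exists>h\<in>set (rightOpts H). dead_ge g h)"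

lemma dead_ge_iff:
  "dead_ge G H \<longleftrightarrow> leftOpts G = [] \<and> leftOpts H = [] \<and> (rightOpts G = [] \<longrightarrow> rightOpts H = []) \<and>
     (\<forall>g\<in>set (rightOpts G). \<exists>h\<in>set (rightOpts H). dead_ge g h)"
  by (cases G) simp

lemma dead_geI:
  assumes "leftOpts G = []" "leftOpts H = []" "rightOpts G = [] \<Longrightarrow> rightOpts H = []"
    and "\<And>g. g \<in> set (rightOpts G) \<Longrightarrow> \<exists>h\<in>set (rightOpts H). dead_ge g h"
  shows "dead_ge G H"
  using assms by (simp add: dead_ge_iff[of G H])

lemma dead_ge_rightOptsD:
  "dead_ge G H \<Longrightarrow> g \<in> set (rightOpts G) \<Longrightarrow> \<exists>h\<in>set (rightOpts H). dead_ge g h"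
  by (simp add: dead_ge_iff[of G H])

lemma dead_ge_outcomes:
  assumes "dead_ge G H"
  shows "(leftFirst (H \<oplus> X) \<longrightarrow> leftFirst (G \<oplus> X)) \<and> (leftSecond (H \<oplus> X) \<longrightarrow> leftSecond (G \<oplus> X))"
  using assms
proof (induction "size G + size X" arbitrary: G H X rule: less_induct)
  case less
  from less.prems have no_left: "leftOpts G = []" "leftOpts H = []"
    and ends: "rightOpts G = [] \<Longrightarrow> rightOpts H = []"
    by (simp_all add: dead_ge_iff[of G H])
  have IH_X: "(leftFirst (H \<oplus> y) \<longrightarrow> leftFirst (G \<oplus> y)) \<and> (leftSecond (H \<oplus> y) \<longrightarrow> leftSecond (G \<oplus> y))"
    if "y \<in> set (leftOpts X) \<or> y \<in> set (rightOpts X)" for y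
    using less.hyps[OF _ less.prems] that by (auto dest: size_opts)
  have IH_G: "leftFirst (h \<oplus> X) \<Longrightarrow> leftFirst (g \<oplus> X)" if "g \<in> set (rightOpts G)" "dead_ge g h" for g h
    using less.hyps[OF _ that(2)] that(1) by (auto dest: size_opts)
  have "leftFirst (G \<oplus> X)" if "leftFirst (H \<oplus> X)"
    using that IH_X by (auto simp: leftFirst_iff no_left)
  moreover have "leftSecond (G \<oplus> X)" if H_X: "leftSecond (H \<oplus> X)"
  proof -
    have "rightOpts (G \<oplus> X) \<noteq> []"
      using H_X ends by (auto simp: leftSecond_iff)
    moreover have "leftFirst x" if "x \<in> set (rightOpts (G \<oplus> X))" for x
      using that
    proof (cases rule: rightOpts_gsumE)
      case (1 g)
      with dead_ge_rightOptsD[OF less.prems] obtain h where "h \<in> set (rightOpts H)" "dead_ge g h"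
        by blast
      then show ?thesis
        using 1 IH_G H_X by (auto simp: leftSecond_iff)
    next
      case (2 y)
      then show ?thesis
        using IH_X H_X by (auto simp: leftSecond_iff)
    qed
    ultimately show ?thesis
      by (simp add: leftSecond_iff)
  qed
  ultimately show ?case
    by blast
qed

lemma dead_ge_refl: "left_dead G \<Longrightarrow> dead_ge G G"
  by (induction G) auto

lemma dead_ge_trans [trans]: "dead_ge G H \<Longrightarrow> dead_ge H K \<Longrightarrow> dead_ge G K"
proof (induction G arbitrary: H K)
  case (Game L R)
  show ?case
  proof (rule dead_geI)
    fix g assume g: "g \<in> set (rightOpts (Game L R))"
    obtain h where h: "h \<in> set (rightOpts H)" "dead_ge g h"
      using dead_ge_rightOptsD[OF Game.prems(1) g] by blast
    obtain k where "k \<in> set (rightOpts K)" "dead_ge h k"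
      using dead_ge_rightOptsD[OF Game.prems(2) h(1)] by blast
    then show "\<exists>k\<in>set (rightOpts K). dead_ge g k"
      using Game.IH(2) g h(2) by auto
  qed (use Game.prems in \<open>auto simp: dead_ge_iff[of H] dead_ge_iff[of K]\<close>)
qed

lemma dead_ge_gsum: "dead_ge G H \<Longrightarrow> dead_ge K M \<Longrightarrow> dead_ge (G \<oplus> K) (H \<oplus> M)"
proof (induction "size G + size K" arbitrary: G H K M rule: less_induct)
  case less
  show ?case
  proof (rule dead_geI)
    fix x assume "x \<in> set (rightOpts (G \<oplus> K))"
    then show "\<exists>h\<in>set (rightOpts (H \<oplus> M)). dead_ge x h"
    proof (cases rule: rightOpts_gsumE)
      case (1 g)
      then obtain h where "h \<in> set (rightOpts H)" "dead_ge g h"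
        using dead_ge_rightOptsD[OF less.prems(1)] by blast
      moreover have "dead_ge (g \<oplus> K) (h \<oplus> M)"
        using less.hyps[OF _ \<open>dead_ge g h\<close> less.prems(2)] 1 by (auto dest: size_opts)
      ultimately show ?thesis
        using 1 by auto
    next
      case (2 k)
      then obtain m where "m \<in> set (rightOpts M)" "dead_ge k m"
        using dead_ge_rightOptsD[OF less.prems(2)] by blast
      moreover have "dead_ge (G \<oplus> k) (H \<oplus> m)"
        using less.hyps[OF _ less.prems(1) \<open>dead_ge k m\<close>] 2 by (auto dest: size_opts)
      ultimately show ?thesis
        using 2 by auto
    qed
  qed (use less.prems in \<open>auto simp: dead_ge_iff[of G] dead_ge_iff[of K]\<close>)
qed

lemma dead_ge_gsum_commute: "left_dead G \<Longrightarrow> left_dead K \<Longrightarrow> dead_ge (G \<oplus> K) (K \<oplus> G)"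
proof (induction "size G + size K" arbitrary: G K rule: less_induct)
  case less
  show ?case
  proof (rule dead_geI)
    fix x assume "x \<in> set (rightOpts (G \<oplus> K))"
    then show "\<exists>h\<in>set (rightOpts (K \<oplus> G)). dead_ge x h"
    proof (cases rule: rightOpts_gsumE)
      case (1 g)
      then have "dead_ge (g \<oplus> K) (K \<oplus> g)"
        using less.hyps[of g K] less.prems by (auto simp: left_dead_iff[of G] dest: size_opts)
      then show ?thesis
        using 1 by auto
    next
      case (2 k)
      then have "dead_ge (G \<oplus> k) (k \<oplus> G)"
        using less.hyps[of G k] less.prems by (auto simp: left_dead_iff[of K] dest: size_opts)
      then show ?thesis
        using 2 by auto
    qed
  qed (use less.prems in \<open>auto simp: left_dead_iff[of G] left_dead_iff[of K]\<close>)
qed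

definition dead_eq :: "game \<Rightarrow> game \<Rightarrow> bool" where
  "dead_eq G H \<longleftrightarrow> dead_ge G H \<and> dead_ge H G"

lemma dead_eq_refl: "left_dead G \<Longrightarrow> dead_eq G G"
  by (simp add: dead_eq_def dead_ge_refl)

lemma dead_eq_sym: "dead_eq G H \<Longrightarrow> dead_eq H G"
  by (simp add: dead_eq_def)

lemma dead_eq_trans [trans]: "dead_eq G H \<Longrightarrow> dead_eq H K \<Longrightarrow> dead_eq G K"
  unfolding dead_eq_def using dead_ge_trans by blast

lemma dead_eq_dead_ge_trans [trans]: "dead_eq G H \<Longrightarrow> dead_ge H K \<Longrightarrow> dead_ge G K"
  unfolding dead_eq_def by (blast intro: dead_ge_trans)

lemma dead_ge_dead_eq_trans [trans]: "dead_ge G H \<Longrightarrow> dead_eq H K \<Longrightarrow> dead_ge G K"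
  unfolding dead_eq_def by (blast intro: dead_ge_trans)

lemma dead_eq_gsum: "dead_eq G H \<Longrightarrow> dead_eq K M \<Longrightarrow> dead_eq (G \<oplus> K) (H \<oplus> M)"
  by (simp add: dead_eq_def dead_ge_gsum)

lemma dead_eq_gsum_commute: "left_dead G \<Longrightarrow> left_dead K \<Longrightarrow> dead_eq (G \<oplus> K) (K \<oplus> G)"
  by (simp add: dead_eq_def dead_ge_gsum_commute)

lemma dead_eq_gsum_interchange:
  assumes "left_dead A" "left_dead B" "left_dead C" "left_dead E"
  shows "dead_eq ((A \<oplus> B) \<oplus> (C \<oplus> E)) ((A \<oplus> C) \<oplus> (B \<oplus> E))"
proof -
  have "(A \<oplus> B) \<oplus> (C \<oplus> E) = A \<oplus> ((B \<oplus> C) \<oplus> E)"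
    by (simp add: gsum_assoc)
  also have "dead_eq \<dots> (A \<oplus> ((C \<oplus> B) \<oplus> E))"
    using assms by (intro dead_eq_gsum dead_eq_refl dead_eq_gsum_commute) (simp_all add: left_dead_gsum)
  also have "A \<oplus> ((C \<oplus> B) \<oplus> E) = (A \<oplus> C) \<oplus> (B \<oplus> E)"
    by (simp add: gsum_assoc)
  finally show ?thesis .
qed

lemma dead_eq_indexed_rightOptsI:
  assumes "leftOpts G = []" "leftOpts H = []"
    and "set (rightOpts G) = f ` I" "set (rightOpts H) = g ` I"
    and "\<And>i. i \<in> I \<Longrightarrow> dead_eq (f i) (g i)"
  shows "dead_eq G H"
  unfolding dead_eq_def
proof
  show "dead_ge G H"
    using assms by (intro dead_geI) (auto simp flip: set_empty simp: dead_eq_def)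
  show "dead_ge H G"
    using assms by (intro dead_geI) (auto simp flip: set_empty simp: dead_eq_def)
qed

lemma dead_eq_imp_equiv_univ:
  assumes "dead_eq G H"
  shows "equiv_univ U G H"
proof -
  have "leftFirst (G \<oplus> X) = leftFirst (H \<oplus> X) \<and> leftSecond (G \<oplus> X) = leftSecond (H \<oplus> X)" for X
    using assms dead_ge_outcomes unfolding dead_eq_def by blast
  then show ?thesis
    by (simp add: equiv_univ_def misere_outcome_def)
qed

lemma rightOpt_gmult_Suc:
  assumes "left_dead G" "x \<in> set (rightOpts (gmult (Suc k) G))"
  shows "\<exists>g\<in>set (rightOpts G). dead_eq x (g \<oplus> gmult k G)"
  using assms(2)
proof (induction k arbitrary: x)
  case 0
  then show ?case
    using assms(1) by (auto simp: zero_def[symmetric] left_dead_iff[of G] intro: dead_eq_refl)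
next
  case (Suc k)
  from Suc.prems show ?case
    unfolding gmult.simps(2)[of "Suc k"]
  proof (cases rule: rightOpts_gsumE)
    case (1 g)
    have "dead_eq x (g \<oplus> gmult (Suc k) G)"
      unfolding 1 using assms(1) 1
      by (intro dead_eq_refl left_dead_gsum left_dead_gmult) (auto simp: left_dead_iff[of G])
    then show ?thesis
      using 1 by blast
  next
    case (2 y)
    then obtain g where g: "g \<in> set (rightOpts G)" and y: "dead_eq y (g \<oplus> gmult k G)"
      using Suc.IH by blast
    have left_dead_g: "left_dead g"
      using assms(1) g by (simp add: left_dead_iff[of G])
    have "dead_eq x (G \<oplus> (g \<oplus> gmult k G))"
      unfolding 2 using assms(1) y by (intro dead_eq_gsum dead_eq_refl)
    also have "G \<oplus> (g \<oplus> gmult k G) = (G \<oplus> g) \<oplus> gmult k G"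
      by (simp add: gsum_assoc)
    also have "dead_eq \<dots> ((g \<oplus> G) \<oplus> gmult k G)"
      using assms(1) left_dead_g
      by (intro dead_eq_gsum dead_eq_refl dead_eq_gsum_commute left_dead_gmult)
    also have "(g \<oplus> G) \<oplus> gmult k G = g \<oplus> gmult (Suc k) G"
      by (simp add: gsum_assoc)
    finally show ?thesis
      using g by blast
  qed
qed

section \<open>Domineering on a single row\<close>

declare domineering.simps [simp del]

lemma set_leftOpts_domineering:
  "finite S \<Longrightarrow> set (leftOpts (domineering S)) =
     (\<lambda>(i, j). domineering (S - {(i, j), (Suc i, j)})) ` {(i, j). (i, j) \<in> S \<and> (Suc i, j) \<in> S}"
  by (subst domineering.simps) (auto simp: image_iff)

lemma set_rightOpts_domineering:
  "finite S \<Longrightarrow> set (rightOpts (domineering S)) =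
     (\<lambda>(i, j). domineering (S - {(i, j), (i, Suc j)})) ` {(i, j). (i, j) \<in> S \<and> (i, Suc j) \<in> S}"
  by (subst domineering.simps) (auto simp: image_iff)

definition row :: "nat set \<Rightarrow> game" where
  "row S = domineering ((\<lambda>j. (0, j)) ` S)"

lemma leftOpts_row:
  assumes "finite S"
  shows "leftOpts (row S) = []"
proof -
  have "set (leftOpts (row S)) = {}"
    using set_leftOpts_domineering[of "(\<lambda>j. (0, j)) ` S"] assms by (auto simp: row_def)
  then show ?thesis
    by simp
qed

lemma set_rightOpts_row:
  assumes "finite S"
  shows "set (rightOpts (row S)) = (\<lambda>j. row (S - {j, Suc j})) ` {j \<in> S. Suc j \<in> S}"
proof -
  have "(\<lambda>j. (0::nat, j)) ` S - {(0, j), (0, Suc j)} = (\<lambda>j. (0, j)) ` (S - {j, Suc j})" for j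
    by auto
  then show ?thesis
    using set_rightOpts_domineering[of "(\<lambda>j. (0, j)) ` S"] assms
    by (auto simp: row_def image_iff)
qed

lemma rightOpts_row_eq_Nil: "finite S \<Longrightarrow> rightOpts (row S) = [] \<longleftrightarrow> (\<forall>j\<in>S. Suc j \<notin> S)"
  by (auto simp flip: set_empty simp: set_rightOpts_row)

lemma card_remove_domino_less: "finite S \<Longrightarrow> j \<in> S \<Longrightarrow> Suc j \<in> S \<Longrightarrow> card (S - {j, Suc j}) < card S"
  by (rule psubset_card_mono) auto

lemma left_dead_row: "finite S \<Longrightarrow> left_dead (row S)"
proof (induction "card S" arbitrary: S rule: less_induct)
  case less
  have "left_dead (row (S - {j, Suc j}))" if "j \<in> S" "Suc j \<in> S" for j
    using less.hyps[of "S - {j, Suc j}"] less.prems that card_remove_domino_less by auto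
  then show ?case
    using less.prems by (auto simp: left_dead_iff[of "row S"] leftOpts_row set_rightOpts_row)
qed

lemma row_union:
  assumes "finite A" "finite B" "A \<inter> B = {}" "\<forall>j\<in>A. Suc j \<notin> B" "\<forall>j\<in>B. Suc j \<notin> A"
  shows "dead_eq (row (A \<union> B)) (row A \<oplus> row B)"
  using assms
proof (induction "card A + card B" arbitrary: A B rule: less_induct)
  case less
  let ?dominoes = "\<lambda>S. {j \<in> S. Suc j \<in> S}"
  let ?g = "\<lambda>j. if j \<in> A then row (A - {j, Suc j}) \<oplus> row B else row A \<oplus> row (B - {j, Suc j})"
  have "?dominoes (A \<union> B) = ?dominoes A \<union> ?dominoes B"
    using less.prems(4,5) by blast
  then have options: "set (rightOpts (row A \<oplus> row B)) = ?g ` ?dominoes (A \<union> B)"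
    using less.prems(1-3) by (auto simp: set_rightOpts_row image_Un intro!: image_cong)
  have matched: "dead_eq (row (A \<union> B - {j, Suc j})) (?g j)" if "j \<in> ?dominoes (A \<union> B)" for j
  proof (cases "j \<in> A")
    case True
    with that less.prems have "Suc j \<in> A" "A \<union> B - {j, Suc j} = (A - {j, Suc j}) \<union> B"
      by auto
    with True show ?thesis
      using less.hyps[of "A - {j, Suc j}" B] less.prems card_remove_domino_less by auto
  next
    case False
    with that less.prems have "j \<in> B" "Suc j \<in> B" "A \<union> B - {j, Suc j} = A \<union> (B - {j, Suc j})"
      by auto
    with False show ?thesis
      using less.hyps[of A "B - {j, Suc j}"] less.prems card_remove_domino_less by auto
  qed
  show ?case
    using less.prems(1,2)
    by (intro dead_eq_indexed_rightOptsI[OF _ _ _ options matched])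
      (simp_all add: leftOpts_row set_rightOpts_row)
qed

lemma row_shift:
  assumes "finite S"
  shows "dead_eq (row ((+) t ` S)) (row S)"
  using assms
proof (induction "card S" arbitrary: S rule: less_induct)
  case less
  have "{j \<in> (+) t ` S. Suc j \<in> (+) t ` S} = (+) t ` {j \<in> S. Suc j \<in> S}"
    by auto
  moreover have "(+) t ` S - {t + j, Suc (t + j)} = (+) t ` (S - {j, Suc j})" for j
    by auto
  ultimately have options: "set (rightOpts (row ((+) t ` S))) =
      (\<lambda>j. row ((+) t ` (S - {j, Suc j}))) ` {j \<in> S. Suc j \<in> S}"
    using less.prems by (simp add: set_rightOpts_row image_image)
  have matched: "dead_eq (row ((+) t ` (S - {j, Suc j}))) (row (S - {j, Suc j}))"
    if "j \<in> {j \<in> S. Suc j \<in> S}" for j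
    using less.hyps[of "S - {j, Suc j}"] less.prems that card_remove_domino_less by auto
  show ?case
    using less.prems
    by (intro dead_eq_indexed_rightOptsI[OF _ _ options _ matched])
      (simp_all add: leftOpts_row set_rightOpts_row)
qed

lemma D_eq_row: "D n = row {..<n}"
  unfolding D_def row_def by (rule arg_cong[where f = domineering]) auto

lemma leftOpts_D: "leftOpts (D n) = []"
  by (simp add: D_eq_row leftOpts_row)

lemma set_rightOpts_D: "set (rightOpts (D n)) = {row ({..<n} - {j, Suc j}) | j l. j + l + 2 = n}"
  by (auto simp: D_eq_row set_rightOpts_row less_iff_Suc_add)

lemma rightOpts_D_eq_Nil: "rightOpts (D n) = [] \<longleftrightarrow> n < 2"
  by (auto simp: D_eq_row rightOpts_row_eq_Nil dest: bspec[of _ _ 0])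

lemma row_remove_domino: "dead_eq (row ({..<j + l + 2} - {j, Suc j})) (D j \<oplus> D l)"
proof -
  let ?B = "(+) (j + 2) ` {..<l}"
  have "{..<j + l + 2} - {j, Suc j} = {..<j} \<union> ?B"
  proof (intro set_eqI iffI)
    fix x assume "x \<in> {..<j + l + 2} - {j, Suc j}"
    then show "x \<in> {..<j} \<union> ?B"
      by (cases "x < j") (auto simp: image_iff intro!: bexI[of _ "x - (j + 2)"])
  qed auto
  moreover have "dead_eq (row ({..<j} \<union> ?B)) (row {..<j} \<oplus> row ?B)"
    by (rule row_union) auto
  ultimately have "dead_eq (row ({..<j + l + 2} - {j, Suc j})) (row {..<j} \<oplus> row ?B)"
    by simp
  also have "dead_eq (row {..<j} \<oplus> row ?B) (D j \<oplus> D l)"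
    unfolding D_eq_row by (intro dead_eq_gsum dead_eq_refl left_dead_row row_shift) auto
  finally show ?thesis .
qed

section \<open>The values of the strips\<close>

definition rem_value :: "nat \<Rightarrow> game" where
  "rem_value r = (if r \<le> 1 then zero else if r \<le> 3 then bar 1 else if r = 4 then bar1_0 else bar 2)"

definition dom_value :: "nat \<Rightarrow> game" where
  "dom_value n = gmult (n div 6) bar1_0_sharp \<oplus> rem_value (n mod 6)"

lemma left_dead_dom_value [simp]: "left_dead (dom_value n)"
  by (simp add: dom_value_def rem_value_def bar1_0_def zero_def left_dead_gsum left_dead_gmult)

lemma gmult_gsum_dom_value: "gmult k bar1_0_sharp \<oplus> dom_value n = dom_value (6 * k + n)"
  by (simp add: dom_value_def gmult_add gsum_assoc)

lemma dom_value_4: "dom_value 4 = bar1_0"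
  by (simp add: dom_value_def rem_value_def zero_def[symmetric])

lemma dom_value_sum_ge_rightOpt_small:
  assumes "a < 6" "b < 6"
  shows "\<exists>h\<in>set (rightOpts (dom_value (a + b + 2))). dead_ge (dom_value a \<oplus> dom_value b) h"
proof -
  have "\<forall>a\<in>set [0..<6]. \<forall>b\<in>set [0..<6].
      \<exists>h\<in>set (rightOpts (dom_value (a + b + 2))). dead_ge (dom_value a \<oplus> dom_value b) h"
    by code_simp
  then show ?thesis
    using assms by simp
qed

lemma rightOpt_dom_value_ge_sum_small:
  assumes "r < 6" "h \<in> set (rightOpts (dom_value r))"
  shows "\<exists>a b. a + b + 2 = r \<and> dead_ge h (dom_value a \<oplus> dom_value b)"
proof -
  have "\<forall>r\<in>set [0..<6]. \<forall>h\<in>set (rightOpts (dom_value r)).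
      \<exists>a\<in>set [0..<6]. \<exists>b\<in>set [0..<6]. a + b + 2 = r \<and> dead_ge h (dom_value a \<oplus> dom_value b)"
    by code_simp
  then show ?thesis
    using assms by fastforce
qed

lemma dom_value_sum_ge_rightOpt:
  "\<exists>h\<in>set (rightOpts (dom_value (j + l + 2))). dead_ge (dom_value j \<oplus> dom_value l) h"
proof -
  define a b where "a = j div 6" and "b = l div 6"
  define rj rl where "rj = j mod 6" and "rl = l mod 6"
  have j: "j = 6 * a + rj" and l: "l = 6 * b + rl" and small: "rj < 6" "rl < 6"
    by (simp_all add: a_def b_def rj_def rl_def)
  obtain h where h: "h \<in> set (rightOpts (dom_value (rj + rl + 2)))"
    and h_le: "dead_ge (dom_value rj \<oplus> dom_value rl) h"
    using dom_value_sum_ge_rightOpt_small[OF small] by blast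
  let ?S = "gmult (a + b) bar1_0_sharp"
  have "dom_value j \<oplus> dom_value l =
      (gmult a bar1_0_sharp \<oplus> dom_value rj) \<oplus> (gmult b bar1_0_sharp \<oplus> dom_value rl)"
    by (simp add: j l gmult_gsum_dom_value)
  also have "dead_eq \<dots> ((gmult a bar1_0_sharp \<oplus> gmult b bar1_0_sharp) \<oplus> (dom_value rj \<oplus> dom_value rl))"
    by (intro dead_eq_gsum_interchange left_dead_gmult) simp_all
  also have "gmult a bar1_0_sharp \<oplus> gmult b bar1_0_sharp = ?S"
    by (simp add: gmult_add)
  also have "dead_ge (?S \<oplus> (dom_value rj \<oplus> dom_value rl)) (?S \<oplus> h)"
    using h_le by (intro dead_ge_gsum dead_ge_refl left_dead_gmult) simp
  finally have "dead_ge (dom_value j \<oplus> dom_value l) (?S \<oplus> h)" .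
  moreover have "dom_value (j + l + 2) = ?S \<oplus> dom_value (rj + rl + 2)"
    unfolding gmult_gsum_dom_value by (rule arg_cong[where f = dom_value]) (simp add: j l)
  ultimately show ?thesis
    using h by auto
qed

lemma rightOpt_dom_value_ge_sum:
  assumes "h \<in> set (rightOpts (dom_value n))"
  shows "\<exists>j l. j + l + 2 = n \<and> dead_ge h (dom_value j \<oplus> dom_value l)"
proof -
  define k r where "k = n div 6" and "r = n mod 6"
  have n: "n = 6 * k + r" and r: "r < 6"
    by (simp_all add: k_def r_def)
  have "h \<in> set (rightOpts (gmult k bar1_0_sharp \<oplus> dom_value r))"
    using assms by (simp add: gmult_gsum_dom_value n)
  then show ?thesis
  proof (cases rule: rightOpts_gsumE)
    case (1 x)
    then obtain m where k: "k = Suc m"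
      by (cases k) auto
    have "dead_eq x (bar1_0 \<oplus> gmult m bar1_0_sharp)"
      using rightOpt_gmult_Suc[of bar1_0_sharp x m] 1 k by (simp add: bar1_0_sharp_def)
    then have "dead_eq h ((bar1_0 \<oplus> gmult m bar1_0_sharp) \<oplus> dom_value r)"
      unfolding 1 by (intro dead_eq_gsum dead_eq_refl) simp_all
    also have "(bar1_0 \<oplus> gmult m bar1_0_sharp) \<oplus> dom_value r = bar1_0 \<oplus> dom_value (6 * m + r)"
      by (simp add: gsum_assoc gmult_gsum_dom_value)
    also have "dead_eq \<dots> (dom_value (6 * m + r) \<oplus> dom_value 4)"
      unfolding dom_value_4 by (intro dead_eq_gsum_commute) simp_all
    finally show ?thesis
      using n k unfolding dead_eq_def by (intro exI[of _ "6 * m + r"] exI[of _ 4]) simp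
  next
    case (2 c)
    then obtain a b where ab: "a + b + 2 = r" and c: "dead_ge c (dom_value a \<oplus> dom_value b)"
      using rightOpt_dom_value_ge_sum_small r by blast
    have "dead_ge h (gmult k bar1_0_sharp \<oplus> (dom_value a \<oplus> dom_value b))"
      unfolding 2 using c by (intro dead_ge_gsum dead_ge_refl left_dead_gmult) simp
    also have "gmult k bar1_0_sharp \<oplus> (dom_value a \<oplus> dom_value b) = dom_value (6 * k + a) \<oplus> dom_value b"
      by (simp flip: gsum_assoc add: gmult_gsum_dom_value)
    finally show ?thesis
      using n ab by (intro exI[of _ "6 * k + a"] exI[of _ b]) simp
  qed
qed

lemma rightOpts_dom_value_eq_Nil: "rightOpts (dom_value n) = [] \<longleftrightarrow> n < 2"
proof
  assume no_opts: "rightOpts (dom_value n) = []"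
  show "n < 2"
  proof (rule ccontr)
    assume "\<not> n < 2"
    then have "Suc (Suc (n - 2)) = n"
      by simp
    then show False
      using dom_value_sum_ge_rightOpt[of 0 "n - 2"] no_opts by simp
  qed
next
  assume "n < 2"
  then show "rightOpts (dom_value n) = []"
    by (auto simp: dom_value_def rem_value_def)
qed

lemma D_dead_eq_dom_value: "dead_eq (D n) (dom_value n)"
proof (induction n rule: less_induct)
  case (less n)
  have rightOpt_D: "dead_eq (row ({..<n} - {j, Suc j})) (dom_value j \<oplus> dom_value l)"
    if "j + l + 2 = n" for j l
  proof -
    have "dead_eq (row ({..<n} - {j, Suc j})) (D j \<oplus> D l)"
      using row_remove_domino[of j l] that by simp
    also have "dead_eq (D j \<oplus> D l) (dom_value j \<oplus> dom_value l)"
      using that by (intro dead_eq_gsum less.IH) auto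
    finally show ?thesis .
  qed
  have "dead_ge (D n) (dom_value n)"
  proof (rule dead_geI)
    fix x assume "x \<in> set (rightOpts (D n))"
    then obtain j l where jl: "j + l + 2 = n" and x: "x = row ({..<n} - {j, Suc j})"
      by (auto simp: set_rightOpts_D)
    obtain h where "h \<in> set (rightOpts (dom_value n))" and "dead_ge (dom_value j \<oplus> dom_value l) h"
      using dom_value_sum_ge_rightOpt[of j l, unfolded jl] by blast
    then show "\<exists>h\<in>set (rightOpts (dom_value n)). dead_ge x h"
      unfolding x using dead_eq_dead_ge_trans[OF rightOpt_D[OF jl]] by blast
  qed (simp_all add: leftOpts_D leftOpts_left_dead rightOpts_D_eq_Nil rightOpts_dom_value_eq_Nil)
  moreover have "dead_ge (dom_value n) (D n)"
  proof (rule dead_geI)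
    fix h assume "h \<in> set (rightOpts (dom_value n))"
    then obtain j l where jl: "j + l + 2 = n" and h: "dead_ge h (dom_value j \<oplus> dom_value l)"
      using rightOpt_dom_value_ge_sum by blast
    have "row ({..<n} - {j, Suc j}) \<in> set (rightOpts (D n))"
      using jl by (auto simp: set_rightOpts_D)
    moreover have "dead_ge h (row ({..<n} - {j, Suc j}))"
      using dead_ge_dead_eq_trans[OF h dead_eq_sym[OF rightOpt_D[OF jl]]] .
    ultimately show "\<exists>x\<in>set (rightOpts (D n)). dead_ge h x"
      by blast
  qed (simp_all add: leftOpts_D leftOpts_left_dead rightOpts_D_eq_Nil rightOpts_dom_value_eq_Nil)
  ultimately show ?case
    by (simp add: dead_eq_def)
qed

theorem mainTheorem8:
  fixes n k r :: nat and U :: "game set"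
  assumes "n = 6 * k + r" and "r \<le> 5" and "universe U"
  shows "equiv_univ U (D n)
           (if r \<in> {0, 1} then gmult k bar1_0_sharp
            else if r \<in> {2, 3} then gmult k bar1_0_sharp \<oplus> bar 1
            else if r = 4 then gmult k bar1_0_sharp \<oplus> bar1_0
            else gmult k bar1_0_sharp \<oplus> bar 2)"
proof -
  have "n div 6 = k" "n mod 6 = r"
    using assms(1,2) by simp_all
  then have closed_form: "dom_value n =
           (if r \<in> {0, 1} then gmult k bar1_0_sharp
            else if r \<in> {2, 3} then gmult k bar1_0_sharp \<oplus> bar 1
            else if r = 4 then gmult k bar1_0_sharp \<oplus> bar1_0
            else gmult k bar1_0_sharp \<oplus> bar 2)"
    using assms(2) by (simp add: dom_value_def rem_value_def del: bar.simps)
  have "equiv_univ U (D n) (dom_value n)"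
    by (rule dead_eq_imp_equiv_univ[OF D_dead_eq_dom_value])
  also note closed_form
  finally show ?thesis .
qed

end
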